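(* In the boundary-driven switching system with $\epsilon=0$, $\gamma>0$, $N\ge2$, writing $D=1+N+2N\gamma$, for all $x\in V$ $$\theta_0(x)=\tfrac{1+\gamma}{1+2\gamma}\Big[\Big(\tfrac{(1+N)+(1+2N)\gamma}{D}-\tfrac{1+2\gamma}{D}x\Big)\rho_{L,0}+\Big(\tfrac{-\gamma}{D}+\tfrac{1+2\gamma}{D}x\Big)\rho_{R,0}\Big]+\tfrac{\gamma}{1+2\gamma}\Big[\Big(\tfrac{(1+N)+(1+2N)\gamma}{D}-\tfrac{1+2\gamma}{D}x\Big)\rho_{L,1}+\Big(\tfrac{-\gamma}{D}+\tfrac{1+2\gamma}{D}x\Big)\rho_{R,1}\Big],$$ and $$\theta_1(1)=\tfrac{\gamma}{1+\gamma}\theta_0(1)+\tfrac1{1+\gamma}\rho_{L,1},\qquad \theta_1(x)=\theta_0(x)\ (x\in\{2,\dots,N-1\}),\qquad \theta_1(N)=\tfrac{\gamma}{1+\gamma}\theta_0(N)+\tfrac1{1+\gamma}\rho_{R,1}.$$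
   Context: Boundary-driven switching system: fix $\sigma\in\{-1,0,1\}$, $N\in\mathbb N$, $V=\{1,\dots,N\}$, $\epsilon\in[0,1]$, $\gamma>0$, and reservoir parameters $\rho_{L,0},\rho_{L,1},\rho_{R,0},\rho_{R,1}\ge0$ (in $[0,1]$ if $\sigma=-1$). Configurations are $\eta=(\eta_0(x),\eta_1(x))_{x\in V}$ with values in $\{0,1\}$ if $\sigma=-1$ and in $\mathbb N_0$ if $\sigma\in\{0,1\}$. Writing $\delta_{(x,i)}$ for one particle at site $x$ in layer $i$, the continuous-time Markov chain has transitions: for $x\in\{1,\dots,N-1\}$, $i\in\{0,1\}$, $\eta\to\eta-\delta_{(x,i)}+\delta_{(x+1,i)}$ at rate $\epsilon^i\eta_i(x)(1+\sigma\eta_i(x+1))$ and $\eta\to\eta-\delta_{(x+1,i)}+\delta_{(x,i)}$ at rate $\epsilon^i\eta_i(x+1)(1+\sigma\eta_i(x))$ ($\epsilon^0=1$); for $x\in V$, $\eta\to\eta-\delta_{(x,i)}+\delta_{(x,1-i)}$ at rate $\gamma\eta_i(x)(1+\sigma\eta_{1-i}(x))$; and for $i\in\{0,1\}$, $\eta\to\eta-\delta_{(1,i)}$ at rate $\eta_i(1)(1+\sigma\rho_{L,i})$, $\eta\to\eta+\delta_{(1,i)}$ at rate $\rho_{L,i}(1+\sigma\eta_i(1))$, $\eta\to\eta-\delta_{(N,i)}$ at rate $\eta_i(N)(1+\sigma\rho_{R,i})$, $\eta\to\eta+\delta_{(N,i)}$ at rate $\rho_{R,i}(1+\sigma\eta_i(N))$.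 This chain has a unique stationary distribution $\mu_{stat}$, and $\theta_i(x):=\mathbb E_{\mu_{stat}}[\eta_i(x)]$ is the stationary microscopic profile. *)

theory Defs
  imports "HOL-Analysis.Analysis"
begin

text \<open>A configuration maps (layer i, site x) to the number of particles eta_i(x).\<close>
type_synonym conf = "nat \<times> nat \<Rightarrow> nat"

definition Conf :: "int \<Rightarrow> nat \<Rightarrow> conf set" where
  "Conf \<sigma> N = {\<eta>. (\<forall>i x. (i \<ge> 2 \<or> x < 1 \<or> x > N) \<longrightarrow> \<eta> (i, x) = 0)
                   \<and> (\<sigma> = -1 \<longrightarrow> (\<forall>p. \<eta> p \<le> 1))}"

definition addp :: "nat \<Rightarrow> nat \<Rightarrow> conf \<Rightarrow> conf" where
  "addp i x \<eta> = \<eta>((i, x) := \<eta> (i, x) + 1)"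

definition remp :: "nat \<Rightarrow> nat \<Rightarrow> conf \<Rightarrow> conf" where
  "remp i x \<eta> = \<eta>((i, x) := \<eta> (i, x) - 1)"

text \<open>Elementary moves:
  HopR i x : particle in layer i from x to x+1;
  HopL i x : particle in layer i from x+1 to x;
  Switch i x : particle at site x from layer i to layer 1-i;
  OutL i, InL i, OutR i, InR i : boundary removal / injection at site 1 resp. N.\<close>
datatype move = HopR nat nat | HopL nat nat | Switch nat nat
  | OutL nat | InL nat | OutR nat | InR nat

definition moves :: "nat \<Rightarrow> move set" where
  "moves N = (\<Union>i\<in>{0,1}. (\<Union>x\<in>{1..N-1}. {HopR i x, HopL i x})
                        \<union> (\<Union>x\<in>{1..N}. {Switch i x})
                        \<union> {OutL i, InL i, OutR i, InR i})"

fun apply_move :: "nat \<Rightarrow> move \<Rightarrow> conf \<Rightarrow> conf" where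
  "apply_move N (HopR i x) \<eta> = addp i (x+1) (remp i x \<eta>)"
| "apply_move N (HopL i x) \<eta> = addp i x (remp i (x+1) \<eta>)"
| "apply_move N (Switch i x) \<eta> = addp (1 - i) x (remp i x \<eta>)"
| "apply_move N (OutL i) \<eta> = remp i 1 \<eta>"
| "apply_move N (InL i) \<eta> = addp i 1 \<eta>"
| "apply_move N (OutR i) \<eta> = remp i N \<eta>"
| "apply_move N (InR i) \<eta> = addp i N \<eta>"

fun move_rate :: "int \<Rightarrow> nat \<Rightarrow> real \<Rightarrow> real \<Rightarrow> (nat \<Rightarrow> real) \<Rightarrow> (nat \<Rightarrow> real)
                   \<Rightarrow> move \<Rightarrow> conf \<Rightarrow> real" where
  "move_rate \<sigma> N \<epsilon> \<gamma> rL rR (HopR i x) \<eta> =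
     \<epsilon> ^ i * real (\<eta> (i, x)) * (1 + of_int \<sigma> * real (\<eta> (i, x+1)))"
| "move_rate \<sigma> N \<epsilon> \<gamma> rL rR (HopL i x) \<eta> =
     \<epsilon> ^ i * real (\<eta> (i, x+1)) * (1 + of_int \<sigma> * real (\<eta> (i, x)))"
| "move_rate \<sigma> N \<epsilon> \<gamma> rL rR (Switch i x) \<eta> =
     \<gamma> * real (\<eta> (i, x)) * (1 + of_int \<sigma> * real (\<eta> (1 - i, x)))"
| "move_rate \<sigma> N \<epsilon> \<gamma> rL rR (OutL i) \<eta> = real (\<eta> (i, 1)) * (1 + of_int \<sigma> * rL i)"
| "move_rate \<sigma> N \<epsilon> \<gamma> rL rR (InL i) \<eta> = rL i * (1 + of_int \<sigma> * real (\<eta> (i, 1)))"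
| "move_rate \<sigma> N \<epsilon> \<gamma> rL rR (OutR i) \<eta> = real (\<eta> (i, N)) * (1 + of_int \<sigma> * rR i)"
| "move_rate \<sigma> N \<epsilon> \<gamma> rL rR (InR i) \<eta> = rR i * (1 + of_int \<sigma> * real (\<eta> (i, N)))"

definition Qrate :: "int \<Rightarrow> nat \<Rightarrow> real \<Rightarrow> real \<Rightarrow> (nat \<Rightarrow> real) \<Rightarrow> (nat \<Rightarrow> real)
                     \<Rightarrow> conf \<Rightarrow> conf \<Rightarrow> real" where
  "Qrate \<sigma> N \<epsilon> \<gamma> rL rR \<eta> \<eta>' =
     (\<Sum>m\<in>moves N. if apply_move N m \<eta> = \<eta>' \<and> \<eta>' \<noteq> \<eta>
                   then move_rate \<sigma> N \<epsilon> \<gamma> rL rR m \<eta> else 0)"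

definition out_rate :: "int \<Rightarrow> nat \<Rightarrow> real \<Rightarrow> real \<Rightarrow> (nat \<Rightarrow> real) \<Rightarrow> (nat \<Rightarrow> real)
                     \<Rightarrow> conf \<Rightarrow> real" where
  "out_rate \<sigma> N \<epsilon> \<gamma> rL rR \<eta> =
     (\<Sum>m\<in>moves N. if apply_move N m \<eta> \<noteq> \<eta> then move_rate \<sigma> N \<epsilon> \<gamma> rL rR m \<eta> else 0)"

definition stationary :: "int \<Rightarrow> nat \<Rightarrow> real \<Rightarrow> real \<Rightarrow> (nat \<Rightarrow> real) \<Rightarrow> (nat \<Rightarrow> real)
                          \<Rightarrow> (conf \<Rightarrow> real) \<Rightarrow> bool" where
  "stationary \<sigma> N \<epsilon> \<gamma> rL rR \<mu> \<longleftrightarrow>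
     (\<forall>\<eta>. \<mu> \<eta> \<ge> 0) \<and> (\<forall>\<eta>. \<eta> \<notin> Conf \<sigma> N \<longrightarrow> \<mu> \<eta> = 0)
     \<and> (\<mu> has_sum 1) (Conf \<sigma> N)
     \<and> (\<forall>\<eta>'\<in>Conf \<sigma> N.
          ((\<lambda>\<eta>. \<mu> \<eta> * Qrate \<sigma> N \<epsilon> \<gamma> rL rR \<eta> \<eta>') has_sum
             (\<mu> \<eta>' * out_rate \<sigma> N \<epsilon> \<gamma> rL rR \<eta>')) (Conf \<sigma> N))"

definition theta :: "int \<Rightarrow> nat \<Rightarrow> (conf \<Rightarrow> real) \<Rightarrow> nat \<Rightarrow> nat \<Rightarrow> real" where
  "theta \<sigma> N \<mu> i x = (\<Sum>\<^sub>\<infinity>\<eta>\<in>Conf \<sigma> N. \<mu> \<eta> * real (\<eta> (i, x)))"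

end

theory Submission
  imports Defs
begin

text \<open>Stationarity is only given as global balance, without moment bounds, so
  \<open>E[L f] = 0\<close> cannot be applied to the occupation variables \<open>f = \<eta>\<^sub>i(x)\<close> directly.
  Instead the generator is summed against \<open>\<mu>\<close> over the finite truncations
  \<open>{particles \<le> K}\<close>: global balance leaves only the probability flux through the boundary
  of the truncation, weighted by \<open>f \<le> particles\<close>, hence at most \<open>(K + 1) F(K)\<close> with
  \<open>F(K)\<close> the flux leaving the truncation.  Since a truncation is left only by an injection
  at level \<open>K\<close>, \<open>\<Sum>\<^sub>K F(K)\<close> is the expected injection rate, which particle balance
  bounds in terms of the reservoir densities; so \<open>F\<close> is summable and \<open>(K + 1) F(K) \<rightarrow> 0\<close>
  along a subsequence.  Along it the truncated first moments satisfy the stationary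
  equations asymptotically.  For \<open>\<epsilon> = 0\<close> layer 1 only switches, so it equals layer 0 in
  the bulk and is given by the reservoir at the two ends; eliminating it leaves for layer 0
  the discrete Laplace equation with Robin boundary conditions, whose unique solution is the
  stated affine profile.  Monotone convergence identifies the limits with \<open>\<theta>\<close>.\<close>

section \<open>Exhaustions and weighted tails of summable sequences\<close>

lemma has_sum_tendsto_exhaustion:
  assumes "(g has_sum L) A" and "mono S" and "\<And>K. finite (S K)" and "\<And>K. S K \<subseteq> A"
    and "\<And>X. finite X \<Longrightarrow> X \<subseteq> A \<Longrightarrow> \<exists>K. X \<subseteq> S K"
  shows "(\<lambda>K. sum g (S K)) \<longlonglongrightarrow> L"
proof -
  have "filterlim S (finite_subsets_at_top A) sequentially"
    unfolding filterlim_finite_subsets_at_top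
  proof (intro allI impI)
    fix X assume "finite X \<and> X \<subseteq> A"
    then obtain K where "X \<subseteq> S K" using assms(5) by blast
    then show "\<forall>\<^sub>F K' in sequentially. finite (S K') \<and> X \<subseteq> S K' \<and> S K' \<subseteq> A"
      using assms(2-4) unfolding eventually_at_top_linorder by (metis monoD order_trans)
  qed
  from filterlim_compose[OF assms(1)[unfolded has_sum_def] this] show ?thesis .
qed

lemma has_sum_exhaustion_subseq:
  fixes g :: "'a \<Rightarrow> real"
  assumes nonneg: "\<And>x. x \<in> A \<Longrightarrow> 0 \<le> g x" and "mono S" and "\<And>K. finite (S K)"
    and "\<And>K. S K \<subseteq> A" and exhaust: "\<And>X. finite X \<Longrightarrow> X \<subseteq> A \<Longrightarrow> \<exists>K. X \<subseteq> S K"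
    and k: "\<And>j. j \<le> k j" and lim: "(\<lambda>j. sum g (S (k j))) \<longlonglongrightarrow> L"
  shows "(g has_sum L) A"
proof -
  have le_L: "sum g (S K) \<le> L" for K
  proof (rule LIMSEQ_le_const[OF lim], intro exI[of _ K] allI impI)
    fix j assume "K \<le> j"
    then have "S K \<subseteq> S (k j)" using k \<open>mono S\<close> by (meson monoD order_trans)
    then show "sum g (S K) \<le> sum g (S (k j))"
      using assms(3,4) nonneg by (intro sum_mono2) blast+
  qed
  have bound: "sum g X \<le> L" if X: "finite X" "X \<subseteq> A" for X
  proof -
    obtain K where "X \<subseteq> S K" using exhaust[OF X] ..
    then have "sum g X \<le> sum g (S K)"
      using assms(3,4) nonneg by (intro sum_mono2) blast+
    then show ?thesis using le_L by (rule order_trans)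
  qed
  have "bdd_above (sum g ` {F. F \<subseteq> A \<and> finite F})"
    using bound by (intro bdd_aboveI[of _ L]) auto
  with nonneg have "g summable_on A"
    by (intro nonneg_bdd_above_summable_on) auto
  then have "(g has_sum infsum g A) A" by (rule has_sum_infsum)
  then have "(\<lambda>K. sum g (S K)) \<longlonglongrightarrow> infsum g A"
    using assms(2-5) by (rule has_sum_tendsto_exhaustion)
  moreover have "filterlim k at_top sequentially"
    using k by (intro filterlim_at_top_mono[OF filterlim_ident]) simp
  ultimately have "(\<lambda>j. sum g (S (k j))) \<longlonglongrightarrow> infsum g A"
    by (rule filterlim_compose)
  with lim have "L = infsum g A" by (rule LIMSEQ_unique)
  with \<open>(g has_sum infsum g A) A\<close> show ?thesis by (simp only:)
qed

lemma summable_imp_weighted_subseq_tendsto_0: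
  fixes F :: "nat \<Rightarrow> real"
  assumes "summable F" and nonneg: "\<And>K. 0 \<le> F K"
  obtains k where "\<And>j. j \<le> k j" and "(\<lambda>j. (real (k j) + 1) * F (k j)) \<longlonglongrightarrow> 0"
proof -
  have frequently_small: "\<exists>K\<ge>j. (real K + 1) * F K < \<epsilon>" if "\<epsilon> > 0" for \<epsilon> j
  proof (rule ccontr)
    assume "\<not> ?thesis"
    then have "\<epsilon> * inverse (real (Suc K)) \<le> F K" if "j \<le> K" for K
      using that by (simp add: not_less divide_le_eq ac_simps flip: divide_inverse)
    then have "\<forall>\<^sub>F K in sequentially. norm (\<epsilon> * inverse (real (Suc K))) \<le> F K"
      unfolding eventually_at_top_linorder using \<open>\<epsilon> > 0\<close> by (intro exI[of _ j]) simp
    then have "summable (\<lambda>K. \<epsilon> * inverse (real (Suc K)))"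
      using \<open>summable F\<close> by (rule summable_comparison_test_ev)
    then have "summable (\<lambda>K. inverse (real K) :: real)"
      using \<open>\<epsilon> > 0\<close> by (subst summable_Suc_iff[symmetric]) simp
    then show False using not_summable_harmonic by blast
  qed
  define k where "k j = (SOME K. j \<le> K \<and> (real K + 1) * F K < inverse (real (Suc j)))" for j
  have k: "j \<le> k j \<and> (real (k j) + 1) * F (k j) < inverse (real (Suc j))" for j
    unfolding k_def by (rule someI_ex) (use frequently_small[of "inverse (real (Suc j))" j] in simp)
  have "(\<lambda>j. (real (k j) + 1) * F (k j)) \<longlonglongrightarrow> 0"
  proof (rule Lim_null_comparison[OF _ LIMSEQ_inverse_real_of_nat])
    show "\<forall>\<^sub>F j in sequentially. norm ((real (k j) + 1) * F (k j)) \<le> inverse (real (Suc j))"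
      using k nonneg by (intro always_eventually allI) (simp add: less_imp_le)
  qed
  with k that show ?thesis by blast
qed

section \<open>Approximate solutions of the discrete Robin problem\<close>

lemma second_difference_tendsto_0_imp_affine:
  fixes e :: "nat \<Rightarrow> nat \<Rightarrow> real"
  assumes second_diff: "\<And>x. 2 \<le> x \<Longrightarrow> x + 1 \<le> N \<Longrightarrow> (\<lambda>j. e j (x - 1) + e j (x + 1) - 2 * e j x) \<longlonglongrightarrow> 0"
    and "1 \<le> x" "x \<le> N"
  shows "(\<lambda>j. e j x - e j 1 - (real x - 1) * (e j 2 - e j 1)) \<longlonglongrightarrow> 0"
  using assms(2,3)
proof (induction x rule: less_induct)
  case (less x)
  show ?case
  proof (cases "x \<le> 2")
    case True
    with less.prems have "x = 1 \<or> x = 2" by auto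
    then show ?thesis by auto
  next
    case False
    then obtain z where z: "x = z + 3"
      by (metis add.commute le_Suc_ex not_le numeral_3_eq_3 Suc_leI numeral_2_eq_2)
    let ?d = "\<lambda>y j. e j y - e j 1 - (real y - 1) * (e j 2 - e j 1)"
    have "(\<lambda>j. 2 * ?d (z + 2) j - ?d (z + 1) j + (e j (z + 2 - 1) + e j (z + 2 + 1) - 2 * e j (z + 2)))
        \<longlonglongrightarrow> 2 * 0 - 0 + 0"
      using z less by (intro tendsto_intros less.IH second_diff) auto
    moreover have "(\<lambda>j. 2 * ?d (z + 2) j - ?d (z + 1) j + (e j (z + 2 - 1) + e j (z + 2 + 1) - 2 * e j (z + 2)))
        = ?d x"
      by (rule ext) (simp add: z algebra_simps numeral_3_eq_3 numeral_2_eq_2)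
    ultimately show ?thesis by simp
  qed
qed

text \<open>Writing \<open>e x \<approx> e 1 + (x - 1) \<delta>\<close>, the two boundary conditions force
  \<open>\<kappa> (2 + \<kappa> (N - 1)) e 1 \<approx> 0\<close>.\<close>

lemma robin_problem_tendsto_0:
  fixes e :: "nat \<Rightarrow> nat \<Rightarrow> real"
  assumes "\<kappa> > 0" "N \<ge> 2"
    and second_diff: "\<And>x. 2 \<le> x \<Longrightarrow> x + 1 \<le> N \<Longrightarrow> (\<lambda>j. e j (x - 1) + e j (x + 1) - 2 * e j x) \<longlonglongrightarrow> 0"
    and left: "(\<lambda>j. e j 2 - e j 1 - \<kappa> * e j 1) \<longlonglongrightarrow> 0"
    and right: "(\<lambda>j. e j (N - 1) - e j N - \<kappa> * e j N) \<longlonglongrightarrow> 0"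
    and "1 \<le> x" "x \<le> N"
  shows "(\<lambda>j. e j x) \<longlonglongrightarrow> 0"
proof -
  let ?d = "\<lambda>y j. e j y - e j 1 - (real y - 1) * (e j 2 - e j 1)"
  have affine: "(\<lambda>j. ?d y j) \<longlonglongrightarrow> 0" if "1 \<le> y" "y \<le> N" for y
    using second_difference_tendsto_0_imp_affine[OF second_diff that] .
  define c where "c = \<kappa> * (2 + \<kappa> * (real N - 1))"
  have "c > 0"
    using assms(1,2) unfolding c_def by (simp add: add_pos_nonneg)
  define r where "r j = (e j (N - 1) - e j N - \<kappa> * e j N) + (1 + \<kappa> * (real N - 1)) * (e j 2 - e j 1 - \<kappa> * e j 1)
      - ?d (N - 1) j + (1 + \<kappa>) * ?d N j" for j
  have "r \<longlonglongrightarrow> 0 + (1 + \<kappa> * (real N - 1)) * 0 - 0 + (1 + \<kappa>) * 0"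
    unfolding r_def using assms(2) by (intro tendsto_intros left right affine) auto
  moreover have "r = (\<lambda>j. - c * e j 1)"
  proof
    fix j
    have N1: "real (N - 1) = real N - 1"
      using assms(2) by simp
    show "r j = - c * e j 1"
      unfolding r_def c_def N1 by algebra
  qed
  ultimately have "(\<lambda>j. - c * e j 1) \<longlonglongrightarrow> 0"
    by simp
  then have "(\<lambda>j. (- 1 / c) * (- c * e j 1)) \<longlonglongrightarrow> (- 1 / c) * 0"
    by (intro tendsto_intros)
  then have e1: "(\<lambda>j. e j 1) \<longlonglongrightarrow> 0"
    using \<open>c > 0\<close> by simp
  have "(\<lambda>j. e j 2 - e j 1 - \<kappa> * e j 1 + (1 + \<kappa>) * e j 1) \<longlonglongrightarrow> 0 + (1 + \<kappa>) * 0"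
    by (intro tendsto_intros left e1)
  then have e2: "(\<lambda>j. e j 2) \<longlonglongrightarrow> 0"
    by (simp add: algebra_simps)
  have "(\<lambda>j. ?d x j + e j 1 + (real x - 1) * (e j 2 - e j 1)) \<longlonglongrightarrow> 0 + 0 + (real x - 1) * (0 - 0)"
    using assms by (intro tendsto_intros affine e1 e2)
  then show ?thesis
    by simp
qed

section \<open>Moves and particle counts\<close>

lemma injection_term_le:
  fixes \<rho> R e :: real and s :: int
  assumes "0 \<le> \<rho>" "\<rho> \<le> R" "0 \<le> e" and "s = 0 \<or> s = 1 \<or> (s = -1 \<and> e \<le> 1 \<and> \<rho> \<le> 1)"
  shows "\<rho> * (1 + s * e) \<le> \<rho> + R / (1 + R) * (e * (1 + s * \<rho>))"
proof -
  have q: "0 \<le> R / (1 + R)" "\<rho> \<le> R / (1 + R) * (1 + \<rho>)"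
    using assms(1,2) by (simp_all add: field_simps)
  consider "s = 0" | "s = 1" | "s = -1" "e \<le> 1" "\<rho> \<le> 1"
    using assms(4) by blast
  then show ?thesis
  proof cases
    case 2
    have "\<rho> * e \<le> R / (1 + R) * (1 + \<rho>) * e"
      using q(2) assms(3) by (rule mult_right_mono)
    then show ?thesis using 2 by (simp add: algebra_simps)
  next
    case 3
    have "0 \<le> R / (1 + R) * (e * (1 - \<rho>))" "0 \<le> \<rho> * e"
      using q(1) 3 assms(1,3) by (simp_all only: mult_nonneg_nonneg diff_ge_0_iff_ge)
    then show ?thesis using 3 by (simp add: algebra_simps)
  qed (use assms in simp)
qed

lemma if_zero_eq_of_bool_mult: "(if c then x else 0) = of_bool c * (x :: 'a :: semiring_1)"
  by simp

lemma sum_mult_of_bool_eq: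
  "(\<Sum>x = Suc 0..M. g x * of_bool (x = y)) = (if 1 \<le> y \<and> y \<le> M then g y else (0::real))"
  "(\<Sum>x = Suc 0..M. of_bool (x = y) * g x) = (if 1 \<le> y \<and> y \<le> M then g y else (0::real))"
proof -
  have "(\<Sum>x = Suc 0..M. g x * of_bool (x = y)) = (\<Sum>x = Suc 0..M. if x = y then g x else 0)"
    by (intro sum.cong) auto
  then show "(\<Sum>x = Suc 0..M. g x * of_bool (x = y)) = (if 1 \<le> y \<and> y \<le> M then g y else (0::real))"
    by (simp add: sum.delta')
  then show "(\<Sum>x = Suc 0..M. of_bool (x = y) * g x) = (if 1 \<le> y \<and> y \<le> M then g y else (0::real))"
    by (simp add: mult.commute)
qed

lemma sum_mult_of_bool_Suc_eq:
  "(\<Sum>x = Suc 0..M. g x * of_bool (Suc x = y)) = (if 2 \<le> y \<and> y \<le> Suc M then g (y - 1) else (0::real))"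
  "(\<Sum>x = Suc 0..M. of_bool (Suc x = y) * g x) = (if 2 \<le> y \<and> y \<le> Suc M then g (y - 1) else (0::real))"
proof -
  have "(\<Sum>x = Suc 0..M. g x * of_bool (Suc x = y)) = (\<Sum>x = Suc 0..M. if x = y - 1 \<and> 2 \<le> y then g x else 0)"
    by (intro sum.cong) auto
  then show "(\<Sum>x = Suc 0..M. g x * of_bool (Suc x = y)) = (if 2 \<le> y \<and> y \<le> Suc M then g (y - 1) else (0::real))"
    by (cases "2 \<le> y") (auto simp: sum.delta')
  then show "(\<Sum>x = Suc 0..M. of_bool (Suc x = y) * g x) = (if 2 \<le> y \<and> y \<le> Suc M then g (y - 1) else (0::real))"
    by (simp add: mult.commute)
qed

fun move_source :: "nat \<Rightarrow> move \<Rightarrow> (nat \<times> nat) option" where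
  "move_source N (HopR i x) = Some (i, x)"
| "move_source N (HopL i x) = Some (i, x + 1)"
| "move_source N (Switch i x) = Some (i, x)"
| "move_source N (OutL i) = Some (i, 1)"
| "move_source N (InL i) = None"
| "move_source N (OutR i) = Some (i, N)"
| "move_source N (InR i) = None"

fun move_target :: "nat \<Rightarrow> move \<Rightarrow> (nat \<times> nat) option" where
  "move_target N (HopR i x) = Some (i, x + 1)"
| "move_target N (HopL i x) = Some (i, x)"
| "move_target N (Switch i x) = Some (1 - i, x)"
| "move_target N (OutL i) = None"
| "move_target N (InL i) = Some (i, 1)"
| "move_target N (OutR i) = None"
| "move_target N (InR i) = Some (i, N)"

fun particle_change :: "move \<Rightarrow> real" where
  "particle_change (InL i) = 1"
| "particle_change (InR i) = 1"
| "particle_change (OutL i) = -1"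
| "particle_change (OutR i) = -1"
| "particle_change _ = 0"

lemma particle_change_cases: "particle_change m \<in> {-1, 0, 1}"
  by (cases m) auto

lemma move_rate_mult_coord_change:
  "move_rate \<sigma> N \<epsilon> \<gamma> rL rR m \<eta> * (real (apply_move N m \<eta> p) - real (\<eta> p)) =
   move_rate \<sigma> N \<epsilon> \<gamma> rL rR m \<eta> *
     (of_bool (move_target N m = Some p) - of_bool (move_source N m = Some p))"
proof -
  have remove: "real n * c * (real (n - Suc 0) - real n) = - (real n * c)" for n c
    by (cases n) auto
  show ?thesis
    by (cases m) (auto simp: addp_def remp_def of_nat_diff remove)
qed

lemma mem_moves [simp]:
  "HopR i x \<in> moves N \<longleftrightarrow> i \<in> {0, 1} \<and> x \<in> {1..N - 1}"
  "HopL i x \<in> moves N \<longleftrightarrow> i \<in> {0, 1} \<and> x \<in> {1..N - 1}"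
  "Switch i x \<in> moves N \<longleftrightarrow> i \<in> {0, 1} \<and> x \<in> {1..N}"
  "OutL i \<in> moves N \<longleftrightarrow> i \<in> {0, 1}" "InL i \<in> moves N \<longleftrightarrow> i \<in> {0, 1}"
  "OutR i \<in> moves N \<longleftrightarrow> i \<in> {0, 1}" "InR i \<in> moves N \<longleftrightarrow> i \<in> {0, 1}"
  by (auto simp: moves_def)

definition sites :: "nat \<Rightarrow> (nat \<times> nat) set" where
  "sites N = {0, 1} \<times> {1..N}"

definition particles :: "nat \<Rightarrow> conf \<Rightarrow> nat" where
  "particles N \<eta> = (\<Sum>p\<in>sites N. \<eta> p)"

lemma finite_sites [simp]: "finite (sites N)"
  by (simp add: sites_def)

lemma coord_le_particles: "p \<in> sites N \<Longrightarrow> \<eta> p \<le> particles N \<eta>"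
  unfolding particles_def by (rule member_le_sum) auto

lemma sum_sites_move_change:
  assumes "m \<in> moves N" "1 \<le> N"
  shows "(\<Sum>p\<in>sites N. of_bool (move_target N m = Some p) - of_bool (move_source N m = Some p))
         = particle_change m"
proof -
  have delta: "(\<Sum>p\<in>sites N. of_bool (Some q = Some p)) = of_bool (q \<in> sites N)" for q :: "nat \<times> nat"
    by (simp add: of_bool_def sum.delta)
  show ?thesis
    using assms by (cases m) (auto simp: sum_subtractf sum_negf delta sites_def)
qed

lemma move_rate_mult_particles_change:
  assumes "m \<in> moves N" "1 \<le> N"
  shows "move_rate \<sigma> N \<epsilon> \<gamma> rL rR m \<eta> * (real (particles N (apply_move N m \<eta>)) - real (particles N \<eta>))
       = move_rate \<sigma> N \<epsilon> \<gamma> rL rR m \<eta> * particle_change m"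
proof -
  have "move_rate \<sigma> N \<epsilon> \<gamma> rL rR m \<eta> * (real (particles N (apply_move N m \<eta>)) - real (particles N \<eta>))
     = (\<Sum>p\<in>sites N. move_rate \<sigma> N \<epsilon> \<gamma> rL rR m \<eta> * (real (apply_move N m \<eta> p) - real (\<eta> p)))"
    by (simp add: particles_def sum_distrib_left right_diff_distrib sum_subtractf)
  also have "\<dots> = move_rate \<sigma> N \<epsilon> \<gamma> rL rR m \<eta> *
      (\<Sum>p\<in>sites N. of_bool (move_target N m = Some p) - of_bool (move_source N m = Some p))"
    by (simp add: move_rate_mult_coord_change sum_distrib_left)
  finally show ?thesis
    using sum_sites_move_change[OF assms] by simp
qed

lemma sum_moves:
  fixes h :: "move \<Rightarrow> 'b::comm_monoid_add"
  shows "sum h (moves N) = (\<Sum>i\<in>{0,1::nat}. (\<Sum>x\<in>{1..N-1}. h (HopR i x) + h (HopL i x))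
      + (\<Sum>x\<in>{1..N}. h (Switch i x)) + h (OutL i) + h (InL i) + h (OutR i) + h (InR i))"
proof -
  define B where "B i = (\<Union>x\<in>{1..N-1}. {HopR i x, HopL i x}) \<union> (\<Union>x\<in>{1..N}. {Switch i x})
                        \<union> {OutL i, InL i, OutR i, InR i}" for i
  have "moves N = (\<Union>i\<in>{0,1}. B i)"
    unfolding moves_def B_def by simp
  then have "sum h (moves N) = (\<Sum>i\<in>{0,1::nat}. sum h (B i))"
    by (simp only:) (rule sum.UNION_disjoint, auto simp: B_def)
  moreover have "sum h (B i) = (\<Sum>x\<in>{1..N-1}. h (HopR i x) + h (HopL i x))
      + (\<Sum>x\<in>{1..N}. h (Switch i x)) + h (OutL i) + h (InL i) + h (OutR i) + h (InR i)" for i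
  proof -
    have hops: "sum h (\<Union>x\<in>{1..N-1}. {HopR i x, HopL i x}) = (\<Sum>x\<in>{1..N-1}. h (HopR i x) + h (HopL i x))"
      by (subst sum.UNION_disjoint) auto
    have switches: "sum h (\<Union>x\<in>{1..N}. {Switch i x}) = (\<Sum>x\<in>{1..N}. h (Switch i x))"
      by (subst sum.UNION_disjoint) auto
    have "sum h (B i) = sum h (\<Union>x\<in>{1..N-1}. {HopR i x, HopL i x}) + sum h (\<Union>x\<in>{1..N}. {Switch i x})
        + sum h {OutL i, InL i, OutR i, InR i}"
      unfolding B_def by (subst sum.union_disjoint, auto)+
    then show ?thesis
      unfolding hops switches by (simp add: add.assoc)
  qed
  ultimately show ?thesis by simp
qed

section \<open>Truncated balance of a stationary measure\<close>

locale switching_stationary =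
  fixes \<sigma> :: int and N :: nat and \<gamma> :: real and rL rR :: "nat \<Rightarrow> real"
    and \<mu> :: "conf \<Rightarrow> real"
  assumes sigma: "\<sigma> \<in> {-1, 0, 1}"
    and N_ge_2: "N \<ge> 2"
    and gamma_pos: "\<gamma> > 0"
    and rho_nonneg: "\<forall>i\<in>{0,1}. rL i \<ge> 0 \<and> rR i \<ge> 0"
    and rho_le_1: "\<sigma> = -1 \<longrightarrow> (\<forall>i\<in>{0,1}. rL i \<le> 1 \<and> rR i \<le> 1)"
    and stationary: "stationary \<sigma> N 0 \<gamma> rL rR \<mu>"
begin

abbreviation "\<Omega> \<equiv> Conf \<sigma> N"
abbreviation "rate m \<eta> \<equiv> move_rate \<sigma> N 0 \<gamma> rL rR m \<eta>"
abbreviation "jump m \<eta> \<equiv> apply_move N m \<eta>"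

lemma mu_nonneg: "0 \<le> \<mu> \<eta>"
  using stationary unfolding stationary_def by (elim conjE) simp

lemma mu_has_sum: "(\<mu> has_sum 1) \<Omega>"
  using stationary unfolding stationary_def by (elim conjE)

lemma Conf_outside_zero: "\<eta> \<in> \<Omega> \<Longrightarrow> i \<ge> 2 \<or> x < 1 \<or> x > N \<Longrightarrow> \<eta> (i, x) = 0"
  unfolding Conf_def by force

lemma rate_nonneg:
  assumes "\<eta> \<in> \<Omega>" "m \<in> moves N"
  shows "0 \<le> rate m \<eta>"
proof -
  have exclusion: "0 \<le> 1 + real_of_int \<sigma> * real (\<eta> p)" for p
    using sigma assms(1) by (cases p) (auto simp: Conf_def)
  have reservoir: "0 \<le> 1 + real_of_int \<sigma> * rL i" "0 \<le> 1 + real_of_int \<sigma> * rR i" if "i \<in> {0, 1}" for i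
    using sigma rho_le_1 rho_nonneg that by auto
  have rho: "0 \<le> rL i" "0 \<le> rR i" if "i \<in> {0, 1}" for i
    using rho_nonneg that by auto
  show ?thesis
    using assms(2) exclusion reservoir rho gamma_pos by (cases m) (simp_all add: mult_nonneg_nonneg)
qed

text \<open>In the exclusion case a move of positive rate finds its source occupied and its
  target empty, so the occupation numbers stay in \<open>{0, 1}\<close>.\<close>

lemma jump_in_Conf:
  assumes "\<eta> \<in> \<Omega>" "m \<in> moves N" "rate m \<eta> \<noteq> 0"
  shows "jump m \<eta> \<in> \<Omega>"
proof -
  have outside: "\<forall>i x. (i \<ge> 2 \<or> x < 1 \<or> x > N) \<longrightarrow> \<eta> (i, x) = 0"
    using assms(1) by (simp add: Conf_def)
  have support: "\<forall>i x. (i \<ge> 2 \<or> x < 1 \<or> x > N) \<longrightarrow> jump m \<eta> (i, x) = 0"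
    using assms(2) outside N_ge_2 by (cases m) (auto simp: addp_def remp_def)
  have exclusion: "\<forall>p. jump m \<eta> p \<le> 1" if "\<sigma> = -1"
  proof
    fix p
    have le1: "\<eta> q \<le> 1" for q
      using assms(1) that by (cases q) (simp add: Conf_def)
    then have occ: "\<eta> q = 0 \<or> \<eta> q = 1" for q
      by (metis le_antisym less_one not_le)
    have empty: "1 + real_of_int \<sigma> * real (\<eta> q) \<noteq> 0 \<longleftrightarrow> \<eta> q = 0" for q
      using occ[of q] that by auto
    have full: "real (\<eta> q) \<noteq> 0 \<longleftrightarrow> \<eta> q = 1" for q
      using occ[of q] by auto
    show "jump m \<eta> p \<le> 1"
      using assms(3) empty full le1 by (cases m) (auto simp: addp_def remp_def)
  qed
  show ?thesis
    unfolding Conf_def mem_Collect_eq using support exclusion by blast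
qed

lemma particles_jump:
  assumes "\<eta> \<in> \<Omega>" "m \<in> moves N" "rate m \<eta> \<noteq> 0"
  shows "real (particles N (jump m \<eta>)) = real (particles N \<eta>) + particle_change m"
  using move_rate_mult_particles_change[OF assms(2), of \<sigma> 0 \<gamma> rL rR \<eta>] N_ge_2 assms(3) by simp

definition trunc :: "nat \<Rightarrow> conf set" where
  "trunc K = {\<eta> \<in> \<Omega>. particles N \<eta> \<le> K}"

definition mass :: "nat \<Rightarrow> real" where
  "mass K = (\<Sum>\<eta>\<in>trunc K. \<mu> \<eta>)"

lemma trunc_subset: "trunc K \<subseteq> \<Omega>"
  by (auto simp: trunc_def)

lemma mono_trunc: "mono trunc"
  by (auto simp: trunc_def intro!: monoI)

lemma trunc_Suc_subset: "trunc K \<subseteq> trunc (Suc K)"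
  by (auto simp: trunc_def)

lemma finite_trunc [simp]: "finite (trunc K)"
proof -
  have "trunc K \<subseteq> {\<eta>. \<forall>p. (p \<in> sites N \<longrightarrow> \<eta> p \<in> {0..K}) \<and> (p \<notin> sites N \<longrightarrow> \<eta> p = 0)}"
  proof (intro subsetI CollectI allI conjI impI)
    fix \<eta> p assume \<eta>: "\<eta> \<in> trunc K"
    show "\<eta> p \<in> {0..K}" if "p \<in> sites N"
      using coord_le_particles[OF that, of \<eta>] \<eta> by (auto simp: trunc_def)
    show "\<eta> p = 0" if "p \<notin> sites N"
      using \<eta> that by (cases p) (auto simp: trunc_def sites_def Conf_outside_zero)
  qed
  then show ?thesis
    by (rule finite_subset) (rule finite_set_of_finite_funs, auto)
qed

lemma finite_subset_trunc:
  assumes "finite X" "X \<subseteq> \<Omega>"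
  shows "\<exists>K. X \<subseteq> trunc K"
proof
  show "X \<subseteq> trunc (Max (insert 0 (particles N ` X)))"
    using assms by (auto simp: trunc_def intro: Max_ge)
qed

lemma jump_leaving_trunc:
  assumes "\<eta> \<in> trunc K" "m \<in> moves N" "rate m \<eta> \<noteq> 0" "jump m \<eta> \<notin> trunc K"
  shows "jump m \<eta> \<in> \<Omega>" "particles N (jump m \<eta>) = Suc K"
proof -
  have \<eta>: "\<eta> \<in> \<Omega>" "particles N \<eta> \<le> K"
    using assms(1) by (auto simp: trunc_def)
  show \<Omega>: "jump m \<eta> \<in> \<Omega>"
    by (rule jump_in_Conf[OF \<eta>(1) assms(2,3)])
  have "real (particles N (jump m \<eta>)) \<le> real (particles N \<eta>) + 1"
    using particles_jump[OF \<eta>(1) assms(2,3)] particle_change_cases[of m] by auto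
  moreover have "\<not> particles N (jump m \<eta>) \<le> K"
    using assms(4) \<Omega> by (simp add: trunc_def)
  ultimately show "particles N (jump m \<eta>) = Suc K"
    using \<eta>(2) by linarith
qed

abbreviation "Q \<eta> \<eta>' \<equiv> Qrate \<sigma> N 0 \<gamma> rL rR \<eta> \<eta>'"
abbreviation "out \<eta> \<equiv> out_rate \<sigma> N 0 \<gamma> rL rR \<eta>"

lemma Qrate_nonzero_particles:
  assumes "\<eta> \<in> \<Omega>" "Q \<eta> \<eta>' \<noteq> 0"
  shows "particles N \<eta> \<le> Suc (particles N \<eta>')"
proof -
  obtain m where m: "m \<in> moves N" "jump m \<eta> = \<eta>'" "rate m \<eta> \<noteq> 0"
    using assms(2) unfolding Qrate_def by (auto elim!: sum.not_neutral_contains_not_neutral split: if_splits)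
  show ?thesis
    using particles_jump[OF assms(1) m(1,3)] m(2) particle_change_cases[of m] by auto
qed

text \<open>Global balance at a configuration with at most \<open>K\<close> particles only involves
  configurations with at most \<open>K + 1\<close> particles, since a move removes at most one particle.\<close>

lemma balance_trunc:
  assumes "\<eta>' \<in> trunc K"
  shows "\<mu> \<eta>' * out \<eta>' = (\<Sum>\<eta>\<in>trunc (Suc K). \<mu> \<eta> * Q \<eta> \<eta>')"
proof -
  have "((\<lambda>\<eta>. \<mu> \<eta> * Q \<eta> \<eta>') has_sum (\<mu> \<eta>' * out \<eta>')) \<Omega>"
    using stationary assms trunc_subset unfolding stationary_def by blast
  moreover have "((\<lambda>\<eta>. \<mu> \<eta> * Q \<eta> \<eta>') has_sum (\<Sum>\<eta>\<in>trunc (Suc K). \<mu> \<eta> * Q \<eta> \<eta>')) \<Omega>"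
  proof (rule has_sum_finite_neutralI[OF finite_trunc trunc_subset _ refl])
    fix \<eta> assume "\<eta> \<in> \<Omega> - trunc (Suc K)"
    then have "\<not> particles N \<eta> \<le> Suc (particles N \<eta>')" "\<eta> \<in> \<Omega>"
      using assms by (auto simp: trunc_def)
    then show "\<mu> \<eta> * Q \<eta> \<eta>' = 0"
      using Qrate_nonzero_particles by auto
  qed
  ultimately show ?thesis
    by (rule has_sum_unique)
qed

definition generator :: "(conf \<Rightarrow> real) \<Rightarrow> conf \<Rightarrow> real" where
  "generator f \<eta> = (\<Sum>m\<in>moves N. rate m \<eta> * (f (jump m \<eta>) - f \<eta>))"

definition flow_into :: "(conf \<Rightarrow> real) \<Rightarrow> nat \<Rightarrow> conf \<Rightarrow> real" where
  "flow_into f K \<eta> =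
     (\<Sum>m\<in>moves N. if jump m \<eta> \<in> trunc K \<and> jump m \<eta> \<noteq> \<eta> then rate m \<eta> * f (jump m \<eta>) else 0)"

definition flow_out_of :: "(conf \<Rightarrow> real) \<Rightarrow> nat \<Rightarrow> conf \<Rightarrow> real" where
  "flow_out_of f K \<eta> = (\<Sum>m\<in>moves N. if jump m \<eta> \<notin> trunc K then rate m \<eta> * f (jump m \<eta>) else 0)"

definition flux_out :: "(conf \<Rightarrow> real) \<Rightarrow> nat \<Rightarrow> real" where
  "flux_out f K = (\<Sum>\<eta>\<in>trunc K. \<mu> \<eta> * flow_out_of f K \<eta>)"

definition flux_in :: "(conf \<Rightarrow> real) \<Rightarrow> nat \<Rightarrow> real" where
  "flux_in f K = (\<Sum>\<eta>\<in>trunc (Suc K) - trunc K. \<mu> \<eta> * flow_into f K \<eta>)"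

lemma sum_Qrate_trunc: "(\<Sum>\<eta>'\<in>trunc K. f \<eta>' * Q \<eta> \<eta>') = flow_into f K \<eta>"
proof -
  have "(\<Sum>\<eta>'\<in>trunc K. f \<eta>' * Q \<eta> \<eta>') =
      (\<Sum>m\<in>moves N. \<Sum>\<eta>'\<in>trunc K. f \<eta>' * (if jump m \<eta> = \<eta>' \<and> \<eta>' \<noteq> \<eta> then rate m \<eta> else 0))"
    unfolding Qrate_def by (simp add: sum_distrib_left sum.swap[of _ "trunc K"])
  also have "\<dots> = (\<Sum>m\<in>moves N. \<Sum>\<eta>'\<in>trunc K.
      if \<eta>' = jump m \<eta> then (if jump m \<eta> \<noteq> \<eta> then rate m \<eta> * f (jump m \<eta>) else 0) else 0)"
    by (intro sum.cong refl) auto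
  also have "\<dots> = flow_into f K \<eta>"
    unfolding flow_into_def by (intro sum.cong refl) (simp add: sum.delta)
  finally show ?thesis .
qed

lemma sum_balance_trunc:
  "(\<Sum>\<eta>\<in>trunc K. f \<eta> * (\<mu> \<eta> * out \<eta>)) = (\<Sum>\<eta>\<in>trunc (Suc K). \<mu> \<eta> * flow_into f K \<eta>)"
proof -
  have "(\<Sum>\<eta>'\<in>trunc K. f \<eta>' * (\<mu> \<eta>' * out \<eta>'))
      = (\<Sum>\<eta>'\<in>trunc K. \<Sum>\<eta>\<in>trunc (Suc K). \<mu> \<eta> * (f \<eta>' * Q \<eta> \<eta>'))"
    by (intro sum.cong refl) (simp add: balance_trunc sum_distrib_left mult.left_commute)
  also have "\<dots> = (\<Sum>\<eta>\<in>trunc (Suc K). \<mu> \<eta> * flow_into f K \<eta>)"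
    by (subst sum.swap) (simp add: sum_Qrate_trunc flip: sum_distrib_left)
  finally show ?thesis .
qed

lemma generator_eq_flows:
  assumes "\<eta> \<in> trunc K"
  shows "generator f \<eta> = flow_into f K \<eta> + flow_out_of f K \<eta> - f \<eta> * out \<eta>"
proof -
  have "rate m \<eta> * (f (jump m \<eta>) - f \<eta>) =
      (if jump m \<eta> \<in> trunc K \<and> jump m \<eta> \<noteq> \<eta> then rate m \<eta> * f (jump m \<eta>) else 0)
      + (if jump m \<eta> \<notin> trunc K then rate m \<eta> * f (jump m \<eta>) else 0)
      - f \<eta> * (if jump m \<eta> \<noteq> \<eta> then rate m \<eta> else 0)" for m
    using assms by (cases "jump m \<eta> = \<eta>") (auto simp: algebra_simps)
  then show ?thesis
    unfolding generator_def flow_into_def flow_out_of_def out_rate_def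
    by (simp add: sum.distrib sum_subtractf sum_distrib_left)
qed

lemma sum_generator_trunc:
  "(\<Sum>\<eta>\<in>trunc K. \<mu> \<eta> * generator f \<eta>) = flux_out f K - flux_in f K"
proof -
  have "(\<Sum>\<eta>\<in>trunc K. \<mu> \<eta> * generator f \<eta>)
      = (\<Sum>\<eta>\<in>trunc K. \<mu> \<eta> * flow_into f K \<eta>) + flux_out f K
        - (\<Sum>\<eta>\<in>trunc K. f \<eta> * (\<mu> \<eta> * out \<eta>))"
    unfolding flux_out_def
    by (simp add: generator_eq_flows algebra_simps sum.distrib sum_subtractf cong: sum.cong)
  also have "(\<Sum>\<eta>\<in>trunc K. f \<eta> * (\<mu> \<eta> * out \<eta>))
      = (\<Sum>\<eta>\<in>trunc (Suc K) - trunc K. \<mu> \<eta> * flow_into f K \<eta>) + (\<Sum>\<eta>\<in>trunc K. \<mu> \<eta> * flow_into f K \<eta>)"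
    unfolding sum_balance_trunc by (rule sum.subset_diff[OF trunc_Suc_subset finite_trunc])
  finally show ?thesis
    unfolding flux_in_def by simp
qed

definition exit_flux :: "nat \<Rightarrow> real" where
  "exit_flux K = flux_out (\<lambda>_. 1) K"

lemma flux_out_const: "flux_out (\<lambda>_. c) K = c * exit_flux K"
proof -
  have "flow_out_of (\<lambda>_. c) K \<eta> = c * flow_out_of (\<lambda>_. 1) K \<eta>" for \<eta>
    unfolding flow_out_of_def sum_distrib_left by (intro sum.cong) auto
  then show ?thesis
    unfolding exit_flux_def flux_out_def sum_distrib_left by (simp add: mult.left_commute)
qed

lemma flux_in_const: "flux_in (\<lambda>_. c) K = c * exit_flux K"
proof -
  have "generator (\<lambda>_. 1) \<eta> = 0" for \<eta>
    by (simp add: generator_def)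
  then have "flux_in (\<lambda>_. 1) K = exit_flux K"
    using sum_generator_trunc[where f="\<lambda>_. 1" and K=K] by (simp add: exit_flux_def)
  moreover have "flow_into (\<lambda>_. c) K \<eta> = c * flow_into (\<lambda>_. 1) K \<eta>" for \<eta>
    unfolding flow_into_def sum_distrib_left by (intro sum.cong) auto
  ultimately show ?thesis
    unfolding flux_in_def by (simp add: mult.left_commute flip: sum_distrib_left)
qed

lemma flux_out_mono:
  assumes "\<And>\<eta>. \<eta> \<in> \<Omega> \<Longrightarrow> particles N \<eta> = Suc K \<Longrightarrow> f \<eta> \<le> g \<eta>"
  shows "flux_out f K \<le> flux_out g K"
  unfolding flux_out_def flow_out_of_def
proof (intro sum_mono mult_left_mono mu_nonneg)
  fix \<eta> m assume \<eta>: "\<eta> \<in> trunc K" and m: "m \<in> moves N"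
  have "0 \<le> rate m \<eta>"
    using \<eta> m trunc_subset rate_nonneg by blast
  with \<eta> m show "(if jump m \<eta> \<notin> trunc K then rate m \<eta> * f (jump m \<eta>) else 0)
      \<le> (if jump m \<eta> \<notin> trunc K then rate m \<eta> * g (jump m \<eta>) else 0)"
    using assms jump_leaving_trunc by (cases "rate m \<eta> = 0") (auto intro!: mult_left_mono)
qed

lemma flux_in_mono:
  assumes "\<And>\<eta>. \<eta> \<in> trunc K \<Longrightarrow> f \<eta> \<le> g \<eta>"
  shows "flux_in f K \<le> flux_in g K"
  unfolding flux_in_def flow_into_def
proof (intro sum_mono mult_left_mono mu_nonneg)
  fix \<eta> m assume \<eta>: "\<eta> \<in> trunc (Suc K) - trunc K" and m: "m \<in> moves N"
  have "0 \<le> rate m \<eta>"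
    using \<eta> m trunc_subset rate_nonneg by blast
  then show "(if jump m \<eta> \<in> trunc K \<and> jump m \<eta> \<noteq> \<eta> then rate m \<eta> * f (jump m \<eta>) else 0)
      \<le> (if jump m \<eta> \<in> trunc K \<and> jump m \<eta> \<noteq> \<eta> then rate m \<eta> * g (jump m \<eta>) else 0)"
    using assms by (auto intro!: mult_left_mono)
qed

lemma exit_flux_nonneg: "0 \<le> exit_flux K"
  using flux_out_mono[where f="\<lambda>_. 0" and g="\<lambda>_. 1" and K=K] by (simp add: flux_out_const)

lemma sum_generator_coord_bound:
  assumes "p \<in> sites N"
  shows "\<bar>\<Sum>\<eta>\<in>trunc K. \<mu> \<eta> * generator (\<lambda>\<eta>. real (\<eta> p)) \<eta>\<bar> \<le> (real K + 1) * exit_flux K"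
proof -
  let ?f = "\<lambda>\<eta>. real (\<eta> p)"
  have le_particles: "?f \<eta> \<le> real (particles N \<eta>)" for \<eta>
    using coord_le_particles[OF assms] by simp
  have "0 \<le> flux_out ?f K"
    using flux_out_mono[where f="\<lambda>_. 0" and g="?f" and K=K] by (simp add: flux_out_const)
  moreover have "flux_out ?f K \<le> flux_out (\<lambda>_. real K + 1) K"
  proof (rule flux_out_mono)
    fix \<eta> assume "particles N \<eta> = Suc K"
    then show "?f \<eta> \<le> real K + 1"
      using le_particles[of \<eta>] by simp
  qed
  moreover have "0 \<le> flux_in ?f K"
    using flux_in_mono[where f="\<lambda>_. 0" and g="?f" and K=K] by (simp add: flux_in_const)
  moreover have "flux_in ?f K \<le> real K * exit_flux K"
    using flux_in_mono[where f="?f" and g="\<lambda>_. real K" and K=K] le_particles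
    by (fastforce simp: flux_in_const trunc_def intro: order_trans)
  ultimately show ?thesis
    using exit_flux_nonneg[of K] by (simp add: sum_generator_trunc flux_out_const abs_le_iff algebra_simps)
qed

lemma exit_flux_le_sum_generator_particles:
  "exit_flux K \<le> (\<Sum>\<eta>\<in>trunc K. \<mu> \<eta> * generator (\<lambda>\<eta>. real (particles N \<eta>)) \<eta>)"
proof -
  let ?f = "\<lambda>\<eta>. real (particles N \<eta>)"
  have "(real K + 1) * exit_flux K \<le> flux_out ?f K"
    using flux_out_mono[where f="\<lambda>_. real K + 1" and g="?f" and K=K] by (simp add: flux_out_const)
  moreover have "flux_in ?f K \<le> real K * exit_flux K"
    using flux_in_mono[where f="?f" and g="\<lambda>_. real K" and K=K] by (simp add: flux_in_const trunc_def)
  ultimately show ?thesis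
    by (simp add: sum_generator_trunc algebra_simps)
qed

section \<open>Summability of the exit flux\<close>

definition injection_rate :: "conf \<Rightarrow> real" where
  "injection_rate \<eta> = (\<Sum>m\<in>moves N. if particle_change m = 1 then rate m \<eta> else 0)"

definition ejection_rate :: "conf \<Rightarrow> real" where
  "ejection_rate \<eta> = (\<Sum>m\<in>moves N. if particle_change m = -1 then rate m \<eta> else 0)"

lemma generator_particles:
  "generator (\<lambda>\<eta>. real (particles N \<eta>)) \<eta> = injection_rate \<eta> - ejection_rate \<eta>"
proof -
  have "rate m \<eta> * (real (particles N (jump m \<eta>)) - real (particles N \<eta>))
      = (if particle_change m = 1 then rate m \<eta> else 0) - (if particle_change m = -1 then rate m \<eta> else 0)"
    if "m \<in> moves N" for m
    using move_rate_mult_particles_change[OF that, of \<sigma> 0 \<gamma> rL rR \<eta>] N_ge_2 particle_change_cases[of m]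
    by auto
  then show ?thesis
    unfolding generator_def injection_rate_def ejection_rate_def
    by (simp add: sum_subtractf cong: sum.cong)
qed

lemma injection_rate_le:
  assumes "\<eta> \<in> \<Omega>"
  defines "R \<equiv> rL 0 + rL 1 + rR 0 + rR 1"
  shows "injection_rate \<eta> \<le> R + R / (1 + R) * ejection_rate \<eta>"
proof -
  have term_le: "\<rho> * (1 + real_of_int \<sigma> * real (\<eta> p)) \<le> \<rho> + R / (1 + R) * (real (\<eta> p) * (1 + real_of_int \<sigma> * \<rho>))"
    if "0 \<le> \<rho>" "\<rho> \<le> R" "\<sigma> = -1 \<longrightarrow> \<rho> \<le> 1" for p \<rho>
  proof (rule injection_term_le[OF that(1,2)])
    have "\<sigma> = -1 \<longrightarrow> \<eta> p \<le> 1"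
      using assms(1) by (cases p) (simp add: Conf_def)
    then show "\<sigma> = 0 \<or> \<sigma> = 1 \<or> \<sigma> = -1 \<and> real (\<eta> p) \<le> 1 \<and> \<rho> \<le> 1"
      using sigma that(3) by auto
  qed simp
  have bounds: "0 \<le> rL i" "rL i \<le> R" "\<sigma> = -1 \<longrightarrow> rL i \<le> 1"
      "0 \<le> rR i" "rR i \<le> R" "\<sigma> = -1 \<longrightarrow> rR i \<le> 1" if "i \<in> {0, 1}" for i
    using rho_nonneg rho_le_1 that unfolding R_def by fastforce+
  have left: "rate (InL i) \<eta> \<le> rL i + R / (1 + R) * rate (OutL i) \<eta>" if "i \<in> {0, 1}" for i
    using term_le[OF bounds(1-3)[OF that], of "(i, 1)"] by (simp add: mult.commute)
  have right: "rate (InR i) \<eta> \<le> rR i + R / (1 + R) * rate (OutR i) \<eta>" if "i \<in> {0, 1}" for i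
    using term_le[OF bounds(4-6)[OF that], of "(i, N)"] by (simp add: mult.commute)
  have "injection_rate \<eta> = rate (InL 0) \<eta> + rate (InR 0) \<eta> + (rate (InL 1) \<eta> + rate (InR 1) \<eta>)"
    "ejection_rate \<eta> = rate (OutL 0) \<eta> + rate (OutR 0) \<eta> + (rate (OutL 1) \<eta> + rate (OutR 1) \<eta>)"
    unfolding injection_rate_def ejection_rate_def sum_moves by (simp_all del: move_rate.simps)
  with left[of 0] left[of 1] right[of 0] right[of 1] show ?thesis
    unfolding R_def by (simp add: distrib_left del: move_rate.simps)
qed

lemma jump_leaves_trunc_iff:
  assumes "\<eta> \<in> trunc K" "m \<in> moves N" "rate m \<eta> \<noteq> 0"
  shows "jump m \<eta> \<notin> trunc K \<longleftrightarrow> particles N \<eta> = K \<and> particle_change m = 1"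
proof -
  have \<eta>: "\<eta> \<in> \<Omega>" "particles N \<eta> \<le> K"
    using assms(1) by (auto simp: trunc_def)
  have "jump m \<eta> \<notin> trunc K \<longleftrightarrow> real K < real (particles N (jump m \<eta>))"
    using jump_in_Conf[OF \<eta>(1) assms(2,3)] by (simp add: trunc_def not_le)
  also have "\<dots> \<longleftrightarrow> real K < real (particles N \<eta>) + particle_change m"
    by (simp add: particles_jump[OF \<eta>(1) assms(2,3)])
  also have "\<dots> \<longleftrightarrow> particles N \<eta> = K \<and> particle_change m = 1"
    using \<eta>(2) particle_change_cases[of m] by auto
  finally show ?thesis .
qed

lemma exit_flux_eq:
  "exit_flux K = (\<Sum>\<eta>\<in>trunc K. \<mu> \<eta> * (if particles N \<eta> = K then injection_rate \<eta> else 0))"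
proof -
  have "flow_out_of (\<lambda>_. 1) K \<eta> = (if particles N \<eta> = K then injection_rate \<eta> else 0)"
    if \<eta>: "\<eta> \<in> trunc K" for \<eta>
  proof -
    have "(if jump m \<eta> \<notin> trunc K then rate m \<eta> * 1 else 0)
        = (if particles N \<eta> = K then (if particle_change m = 1 then rate m \<eta> else 0) else 0)"
      if "m \<in> moves N" for m
      using jump_leaves_trunc_iff[OF \<eta> that] by (cases "rate m \<eta> = 0") auto
    then show ?thesis
      unfolding flow_out_of_def injection_rate_def by (simp cong: sum.cong)
  qed
  then show ?thesis
    unfolding exit_flux_def flux_out_def by simp
qed

definition trunc_injection :: "nat \<Rightarrow> real" where
  "trunc_injection K = (\<Sum>\<eta>\<in>trunc K. \<mu> \<eta> * injection_rate \<eta>)"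

lemma trunc_injection_eq_sum_exit_flux: "trunc_injection K = (\<Sum>k\<le>K. exit_flux k)"
proof (induction K)
  case 0
  have "exit_flux 0 = trunc_injection 0"
    unfolding trunc_injection_def exit_flux_eq by (intro sum.cong) (auto simp: trunc_def)
  then show ?case
    by simp
next
  case (Suc K)
  let ?level = "\<lambda>\<eta>. \<mu> \<eta> * (if particles N \<eta> = Suc K then injection_rate \<eta> else 0)"
  have "exit_flux (Suc K) = (\<Sum>\<eta>\<in>trunc (Suc K) - trunc K. ?level \<eta>) + (\<Sum>\<eta>\<in>trunc K. ?level \<eta>)"
    unfolding exit_flux_eq by (rule sum.subset_diff[OF trunc_Suc_subset finite_trunc])
  also have "(\<Sum>\<eta>\<in>trunc K. ?level \<eta>) = 0"
    by (intro sum.neutral) (auto simp: trunc_def)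
  also have "(\<Sum>\<eta>\<in>trunc (Suc K) - trunc K. ?level \<eta>)
      = (\<Sum>\<eta>\<in>trunc (Suc K) - trunc K. \<mu> \<eta> * injection_rate \<eta>)"
    by (intro sum.cong) (auto simp: trunc_def)
  finally have "exit_flux (Suc K) = (\<Sum>\<eta>\<in>trunc (Suc K) - trunc K. \<mu> \<eta> * injection_rate \<eta>)"
    by simp
  then show ?case
    using Suc.IH sum.subset_diff[OF trunc_Suc_subset finite_trunc, of "\<lambda>\<eta>. \<mu> \<eta> * injection_rate \<eta>" K]
    by (simp add: trunc_injection_def)
qed

lemma mass_le_1: "mass K \<le> 1"
  unfolding mass_def by (rule finite_sum_le_has_sum[OF mu_has_sum finite_trunc trunc_subset mu_nonneg])

text \<open>Injection is dominated by ejection, and on a truncation the expected ejection is at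
  most the expected injection.\<close>

lemma trunc_injection_le:
  defines "R \<equiv> rL 0 + rL 1 + rR 0 + rR 1"
  shows "trunc_injection K \<le> R * (1 + R)"
proof -
  let ?ejection = "\<Sum>\<eta>\<in>trunc K. \<mu> \<eta> * ejection_rate \<eta>"
  have R: "0 \<le> R"
    using rho_nonneg unfolding R_def by auto
  have "?ejection \<le> trunc_injection K"
    using exit_flux_le_sum_generator_particles[of K] exit_flux_nonneg[of K]
    by (simp add: generator_particles trunc_injection_def right_diff_distrib sum_subtractf)
  then have "R / (1 + R) * ?ejection \<le> R / (1 + R) * trunc_injection K"
    using R by (intro mult_left_mono) simp_all
  moreover have "R * mass K \<le> R"
    using mass_le_1 R by (simp add: mult_left_le)
  moreover have "trunc_injection K \<le> (\<Sum>\<eta>\<in>trunc K. \<mu> \<eta> * (R + R / (1 + R) * ejection_rate \<eta>))"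
    unfolding trunc_injection_def R_def using trunc_subset
    by (intro sum_mono mult_left_mono injection_rate_le mu_nonneg) auto
  moreover have "\<dots> = R * mass K + R / (1 + R) * ?ejection"
    by (simp add: mass_def algebra_simps sum.distrib sum_distrib_left)
  ultimately have "trunc_injection K \<le> R + R / (1 + R) * trunc_injection K"
    by linarith
  then show ?thesis
    using R by (simp add: field_simps)
qed

lemma summable_exit_flux: "summable exit_flux"
  using exit_flux_nonneg trunc_injection_le
  by (intro bounded_imp_summable) (auto simp: trunc_injection_eq_sum_exit_flux)

section \<open>The first-moment equations\<close>

lemma generator_coord:
  "generator (\<lambda>\<eta>. real (\<eta> p)) \<eta> =
     (\<Sum>m\<in>moves N. rate m \<eta> * (of_bool (move_target N m = Some p) - of_bool (move_source N m = Some p)))"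
  unfolding generator_def by (simp add: move_rate_mult_coord_change)

lemma generator_layer0:
  assumes "1 \<le> y" "y \<le> N"
  shows "generator (\<lambda>\<eta>. real (\<eta> (0, y))) \<eta> =
      (if 2 \<le> y then real (\<eta> (0, y - 1)) - real (\<eta> (0, y)) else 0)
    + (if y + 1 \<le> N then real (\<eta> (0, y + 1)) - real (\<eta> (0, y)) else 0)
    + \<gamma> * (real (\<eta> (1, y)) - real (\<eta> (0, y)))
    + (if y = 1 then rL 0 - real (\<eta> (0, 1)) else 0)
    + (if y = N then rR 0 - real (\<eta> (0, N)) else 0)"
  unfolding generator_coord sum_moves using assms N_ge_2
  by (simp add: right_diff_distrib sum_subtractf sum_mult_of_bool_eq sum_mult_of_bool_Suc_eq)
    (auto simp: algebra_simps sum.distrib sum_subtractf sum_mult_of_bool_eq sum_mult_of_bool_Suc_eq)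

lemma generator_layer1:
  assumes "1 \<le> y" "y \<le> N"
  shows "generator (\<lambda>\<eta>. real (\<eta> (1, y))) \<eta> =
      \<gamma> * (real (\<eta> (0, y)) - real (\<eta> (1, y)))
    + (if y = 1 then rL 1 - real (\<eta> (1, 1)) else 0)
    + (if y = N then rR 1 - real (\<eta> (1, N)) else 0)"
  unfolding generator_coord sum_moves using assms N_ge_2
  by (simp add: right_diff_distrib sum_subtractf sum_mult_of_bool_eq sum_mult_of_bool_Suc_eq)
    (auto simp: algebra_simps sum.distrib sum_subtractf sum_mult_of_bool_eq sum_mult_of_bool_Suc_eq)

definition moment :: "nat \<Rightarrow> nat \<times> nat \<Rightarrow> real" where
  "moment K p = (\<Sum>\<eta>\<in>trunc K. \<mu> \<eta> * real (\<eta> p))"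

lemma sum_generator_layer0:
  assumes "1 \<le> y" "y \<le> N"
  shows "(\<Sum>\<eta>\<in>trunc K. \<mu> \<eta> * generator (\<lambda>\<eta>. real (\<eta> (0, y))) \<eta>) =
      (if 2 \<le> y then moment K (0, y - 1) - moment K (0, y) else 0)
    + (if y + 1 \<le> N then moment K (0, y + 1) - moment K (0, y) else 0)
    + \<gamma> * (moment K (1, y) - moment K (0, y))
    + (if y = 1 then rL 0 * mass K - moment K (0, 1) else 0)
    + (if y = N then rR 0 * mass K - moment K (0, N) else 0)"
  unfolding generator_layer0[OF assms] moment_def mass_def if_zero_eq_of_bool_mult
  by (simp add: algebra_simps sum.distrib sum_subtractf sum_distrib_left)

lemma sum_generator_layer1:
  assumes "1 \<le> y" "y \<le> N"
  shows "(\<Sum>\<eta>\<in>trunc K. \<mu> \<eta> * generator (\<lambda>\<eta>. real (\<eta> (1, y))) \<eta>) =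
      \<gamma> * (moment K (0, y) - moment K (1, y))
    + (if y = 1 then rL 1 * mass K - moment K (1, 1) else 0)
    + (if y = N then rR 1 * mass K - moment K (1, N) else 0)"
  unfolding generator_layer1[OF assms] moment_def mass_def if_zero_eq_of_bool_mult
  by (simp add: algebra_simps sum.distrib sum_subtractf sum_distrib_left)

definition kappa :: real where
  "kappa = (1 + 2 * \<gamma>) / (1 + \<gamma>)"

definition eff_rhoL :: real where
  "eff_rhoL = rL 0 + \<gamma> * rL 1 / (1 + \<gamma>)"

definition eff_rhoR :: real where
  "eff_rhoR = rR 0 + \<gamma> * rR 1 / (1 + \<gamma>)"

definition robin_denom :: real where
  "robin_denom = kappa * (2 + kappa * (real N - 1))"

text \<open>The affine solution of the Robin problem: its value \<open>a\<close> at site 1 and slope \<open>b\<close>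
  solve \<open>b - \<kappa> a + eff_rhoL = 0\<close> and \<open>- b - \<kappa> (a + (N - 1) b) + eff_rhoR = 0\<close>.\<close>

definition profile :: "nat \<Rightarrow> real" where
  "profile x = ((1 + kappa * (real N - 1)) * eff_rhoL + eff_rhoR) / robin_denom
     + (real x - 1) * (kappa * (eff_rhoR - eff_rhoL) / robin_denom)"

lemma kappa_pos: "kappa > 0"
  using gamma_pos by (simp add: kappa_def)

lemma robin_denom_pos: "robin_denom > 0"
  using kappa_pos N_ge_2 by (simp add: robin_denom_def add_pos_nonneg)

lemma profile_second_difference: "1 \<le> x \<Longrightarrow> profile (x - 1) + profile (x + 1) - 2 * profile x = 0"
  using robin_denom_pos by (simp add: profile_def of_nat_diff field_simps)

lemma profile_left: "profile 2 - profile 1 - kappa * profile 1 + eff_rhoL = 0"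
  using robin_denom_pos unfolding profile_def by (simp add: field_simps) (simp add: robin_denom_def algebra_simps)

lemma profile_right: "profile (N - 1) - profile N - kappa * profile N + eff_rhoR = 0"
proof -
  have "real (N - 1) = real N - 1"
    using N_ge_2 by simp
  with robin_denom_pos show ?thesis
    unfolding profile_def by (simp add: field_simps) (simp add: robin_denom_def algebra_simps)
qed

lemma profile_eq:
  defines "D \<equiv> 1 + real N + 2 * real N * \<gamma>"
  defines "A \<equiv> (\<lambda>x::nat. ((1 + real N) + (1 + 2 * real N) * \<gamma>) / D - (1 + 2 * \<gamma>) / D * real x)"
  defines "B \<equiv> (\<lambda>x::nat. - \<gamma> / D + (1 + 2 * \<gamma>) / D * real x)"
  shows "profile x = (1 + \<gamma>) / (1 + 2 * \<gamma>) * (A x * rL 0 + B x * rR 0)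
            + \<gamma> / (1 + 2 * \<gamma>) * (A x * rL 1 + B x * rR 1)"
proof -
  have pos: "1 + \<gamma> > 0" "1 + 2 * \<gamma> > 0" "D > 0"
    using gamma_pos unfolding D_def by (auto intro!: add_pos_nonneg)
  have denom: "robin_denom = (1 + 2 * \<gamma>) * D / ((1 + \<gamma>) * (1 + \<gamma>))"
    using pos unfolding robin_denom_def kappa_def D_def by (simp add: field_simps)
  \<comment> \<open>naming the three inverses turns the identity into a polynomial one modulo \<open>inv\<close>\<close>
  define t where "t = 1 / (1 + \<gamma>)"
  define s where "s = 1 / (1 + 2 * \<gamma>)"
  define q where "q = 1 / D"
  have inv: "t * (1 + \<gamma>) = 1" "s * (1 + 2 * \<gamma>) = 1" "q * D = 1"
    using pos by (simp_all add: t_def s_def q_def)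
  have div: "z / (1 + \<gamma>) = z * t" "z / (1 + 2 * \<gamma>) = z * s" "z / D = z * q"
    "z / robin_denom = z * (1 + \<gamma>) * (1 + \<gamma>) * s * q" for z
    using pos by (simp_all add: t_def s_def q_def denom field_simps)
  show ?thesis
    unfolding profile_def A_def B_def kappa_def eff_rhoL_def eff_rhoR_def div
    using inv unfolding D_def by algebra
qed

end

section \<open>Limits along a subsequence of truncations\<close>

locale switching_subseq = switching_stationary +
  fixes k :: "nat \<Rightarrow> nat"
  assumes k_ge: "\<And>j. j \<le> k j"
    and exit_flux_vanishes: "(\<lambda>j. (real (k j) + 1) * exit_flux (k j)) \<longlonglongrightarrow> 0"
begin

abbreviation "u j x \<equiv> moment (k j) (0, x)"
abbreviation "w j x \<equiv> moment (k j) (1, x)"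
abbreviation "m j \<equiv> mass (k j)"

lemma filterlim_k: "filterlim k at_top sequentially"
  using k_ge by (intro filterlim_at_top_mono[OF filterlim_ident]) simp

lemma mass_tendsto_1: "(\<lambda>j. m j) \<longlonglongrightarrow> 1"
proof -
  have "(\<lambda>K. sum \<mu> (trunc K)) \<longlonglongrightarrow> 1"
    using mu_has_sum mono_trunc finite_trunc trunc_subset finite_subset_trunc
    by (rule has_sum_tendsto_exhaustion)
  from filterlim_compose[OF this filterlim_k] show ?thesis
    by (simp add: mass_def)
qed

lemma theta_eq_lim:
  assumes "(\<lambda>j. moment (k j) (i, x)) \<longlonglongrightarrow> L"
  shows "theta \<sigma> N \<mu> i x = L"
proof -
  have "((\<lambda>\<eta>. \<mu> \<eta> * real (\<eta> (i, x))) has_sum L) \<Omega>"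
    using mu_nonneg mono_trunc finite_trunc trunc_subset finite_subset_trunc k_ge assms
    unfolding moment_def by (intro has_sum_exhaustion_subseq) auto
  then show ?thesis
    unfolding theta_def by (rule infsumI)
qed

lemma sum_generator_coord_tendsto_0:
  assumes "p \<in> sites N"
  shows "(\<lambda>j. \<Sum>\<eta>\<in>trunc (k j). \<mu> \<eta> * generator (\<lambda>\<eta>. real (\<eta> p)) \<eta>) \<longlonglongrightarrow> 0"
  using sum_generator_coord_bound[OF assms]
  by (intro Lim_null_comparison[OF _ exit_flux_vanishes] always_eventually allI) simp

lemma layer0_tendsto_0:
  assumes "1 \<le> y" "y \<le> N"
  shows "(\<lambda>j. (if 2 \<le> y then u j (y - 1) - u j y else 0)
    + (if y + 1 \<le> N then u j (y + 1) - u j y else 0)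
    + \<gamma> * (w j y - u j y)
    + (if y = 1 then rL 0 * m j - u j 1 else 0)
    + (if y = N then rR 0 * m j - u j N else 0)) \<longlonglongrightarrow> 0"
proof -
  have "(0, y) \<in> sites N"
    using assms by (simp add: sites_def)
  from sum_generator_coord_tendsto_0[OF this] show ?thesis
    unfolding sum_generator_layer0[OF assms] .
qed

lemma layer1_tendsto_0:
  assumes "1 \<le> y" "y \<le> N"
  shows "(\<lambda>j. \<gamma> * (u j y - w j y)
    + (if y = 1 then rL 1 * m j - w j 1 else 0)
    + (if y = N then rR 1 * m j - w j N else 0)) \<longlonglongrightarrow> 0"
proof -
  have "(1, y) \<in> sites N"
    using assms by (simp add: sites_def)
  from sum_generator_coord_tendsto_0[OF this] show ?thesis
    unfolding sum_generator_layer1[OF assms] .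
qed

lemma switch_interior_tendsto_0:
  assumes "2 \<le> x" "x + 1 \<le> N"
  shows "(\<lambda>j. w j x - u j x) \<longlonglongrightarrow> 0"
proof -
  have "(\<lambda>j. (- 1 / \<gamma>) * (\<gamma> * (u j x - w j x))) \<longlonglongrightarrow> (- 1 / \<gamma>) * 0"
    using layer1_tendsto_0[of x] assms by (intro tendsto_intros) auto
  moreover have "(- 1 / \<gamma>) * (\<gamma> * (u j x - w j x)) = w j x - u j x" for j
    using gamma_pos by (simp add: field_simps)
  ultimately show ?thesis
    by simp
qed

lemma second_difference_tendsto_0:
  assumes "2 \<le> x" "x + 1 \<le> N"
  shows "(\<lambda>j. u j (x - 1) + u j (x + 1) - 2 * u j x) \<longlonglongrightarrow> 0"
proof -
  have "(\<lambda>j. (u j (x - 1) - u j x + (u j (x + 1) - u j x) + \<gamma> * (w j x - u j x)) - \<gamma> * (w j x - u j x))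
      \<longlonglongrightarrow> 0 - \<gamma> * 0"
    using layer0_tendsto_0[of x] switch_interior_tendsto_0 assms by (intro tendsto_intros) auto
  then show ?thesis
    by (simp add: algebra_simps)
qed

text \<open>At each boundary site the switching term of layer 0 is eliminated with the
  layer-1 equation, weighted by \<open>\<gamma> / (1 + \<gamma>)\<close>; what remains is a Robin condition
  for layer 0 alone.\<close>

lemma left_boundary_tendsto_0: "(\<lambda>j. u j 2 - u j 1 - kappa * u j 1 + eff_rhoL) \<longlonglongrightarrow> 0"
proof -
  have "(\<lambda>j. (u j 2 - u j 1 + \<gamma> * (w j 1 - u j 1) + (rL 0 * m j - u j 1))
      + \<gamma> / (1 + \<gamma>) * (\<gamma> * (u j 1 - w j 1) + (rL 1 * m j - w j 1)) - eff_rhoL * (m j - 1))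
      \<longlonglongrightarrow> 0 + \<gamma> / (1 + \<gamma>) * 0 - eff_rhoL * (1 - 1)"
    using layer0_tendsto_0[of 1] layer1_tendsto_0[of 1] N_ge_2
    by (intro tendsto_intros mass_tendsto_1) (auto simp: numeral_2_eq_2)
  moreover have "1 + \<gamma> \<noteq> 0"
    using gamma_pos by simp
  ultimately show ?thesis
    unfolding kappa_def eff_rhoL_def by (simp add: field_simps)
qed

lemma right_boundary_tendsto_0: "(\<lambda>j. u j (N - 1) - u j N - kappa * u j N + eff_rhoR) \<longlonglongrightarrow> 0"
proof -
  have "(\<lambda>j. (u j (N - 1) - u j N + \<gamma> * (w j N - u j N) + (rR 0 * m j - u j N))
      + \<gamma> / (1 + \<gamma>) * (\<gamma> * (u j N - w j N) + (rR 1 * m j - w j N)) - eff_rhoR * (m j - 1))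
      \<longlonglongrightarrow> 0 + \<gamma> / (1 + \<gamma>) * 0 - eff_rhoR * (1 - 1)"
    using layer0_tendsto_0[of N] layer1_tendsto_0[of N] N_ge_2
    by (intro tendsto_intros mass_tendsto_1) auto
  moreover have "1 + \<gamma> \<noteq> 0"
    using gamma_pos by simp
  ultimately show ?thesis
    unfolding kappa_def eff_rhoR_def by (simp add: field_simps)
qed

lemma layer0_tendsto_profile:
  assumes "1 \<le> x" "x \<le> N"
  shows "(\<lambda>j. u j x) \<longlonglongrightarrow> profile x"
proof -
  let ?e = "\<lambda>j y. u j y - profile y"
  have "(\<lambda>j. ?e j x) \<longlonglongrightarrow> 0"
  proof (rule robin_problem_tendsto_0[OF kappa_pos N_ge_2 _ _ _ assms])
    fix y assume "2 \<le> y" "y + 1 \<le> N"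
    then show "(\<lambda>j. ?e j (y - 1) + ?e j (y + 1) - 2 * ?e j y) \<longlonglongrightarrow> 0"
      using second_difference_tendsto_0 profile_second_difference[of y] by (simp add: algebra_simps)
  next
    have "?e j 2 - ?e j 1 - kappa * ?e j 1 = u j 2 - u j 1 - kappa * u j 1 + eff_rhoL" for j
      using profile_left by (simp only: right_diff_distrib)
    with left_boundary_tendsto_0 show "(\<lambda>j. ?e j 2 - ?e j 1 - kappa * ?e j 1) \<longlonglongrightarrow> 0"
      by (simp only:)
  next
    have "?e j (N - 1) - ?e j N - kappa * ?e j N = u j (N - 1) - u j N - kappa * u j N + eff_rhoR" for j
      using profile_right by (simp only: right_diff_distrib)
    with right_boundary_tendsto_0 show "(\<lambda>j. ?e j (N - 1) - ?e j N - kappa * ?e j N) \<longlonglongrightarrow> 0"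
      by (simp only:)
  qed
  then show ?thesis
    using Lim_null by blast
qed

lemma layer1_interior_tendsto:
  assumes "2 \<le> x" "x + 1 \<le> N"
  shows "(\<lambda>j. w j x) \<longlonglongrightarrow> profile x"
proof -
  have "(\<lambda>j. (w j x - u j x) + u j x) \<longlonglongrightarrow> 0 + profile x"
    using assms by (intro tendsto_intros switch_interior_tendsto_0 layer0_tendsto_profile) auto
  then show ?thesis
    by simp
qed

lemma layer1_left_tendsto: "(\<lambda>j. w j 1) \<longlonglongrightarrow> \<gamma> / (1 + \<gamma>) * profile 1 + 1 / (1 + \<gamma>) * rL 1"
proof -
  have "(\<lambda>j. (\<gamma> * u j 1 + rL 1 * m j - (\<gamma> * (u j 1 - w j 1) + (rL 1 * m j - w j 1))) / (1 + \<gamma>))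
      \<longlonglongrightarrow> (\<gamma> * profile 1 + rL 1 * 1 - 0) / (1 + \<gamma>)"
    using layer1_tendsto_0[of 1] N_ge_2 gamma_pos
    by (intro tendsto_intros layer0_tendsto_profile mass_tendsto_1) auto
  moreover have "(\<gamma> * u j 1 + rL 1 * m j - (\<gamma> * (u j 1 - w j 1) + (rL 1 * m j - w j 1))) / (1 + \<gamma>) = w j 1" for j
    using gamma_pos by (simp add: field_simps)
  ultimately show ?thesis
    by (simp add: add_divide_distrib)
qed

lemma layer1_right_tendsto: "(\<lambda>j. w j N) \<longlonglongrightarrow> \<gamma> / (1 + \<gamma>) * profile N + 1 / (1 + \<gamma>) * rR 1"
proof -
  have "(\<lambda>j. (\<gamma> * u j N + rR 1 * m j - (\<gamma> * (u j N - w j N) + (rR 1 * m j - w j N))) / (1 + \<gamma>))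
      \<longlonglongrightarrow> (\<gamma> * profile N + rR 1 * 1 - 0) / (1 + \<gamma>)"
    using layer1_tendsto_0[of N] N_ge_2 gamma_pos
    by (intro tendsto_intros layer0_tendsto_profile mass_tendsto_1) auto
  moreover have "(\<gamma> * u j N + rR 1 * m j - (\<gamma> * (u j N - w j N) + (rR 1 * m j - w j N))) / (1 + \<gamma>) = w j N" for j
    using gamma_pos by (simp add: field_simps)
  ultimately show ?thesis
    by (simp add: add_divide_distrib)
qed

end

theorem mainTheorem5:
  fixes \<sigma> :: int and N :: nat and \<gamma> :: real and rL rR :: "nat \<Rightarrow> real"
    and \<mu> :: "conf \<Rightarrow> real"
  assumes sig: "\<sigma> \<in> {-1, 0, 1}"
    and N2: "N \<ge> 2"
    and gam: "\<gamma> > 0"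
    and rnn: "\<forall>i\<in>{0,1}. rL i \<ge> 0 \<and> rR i \<ge> 0"
    and rle: "\<sigma> = -1 \<longrightarrow> (\<forall>i\<in>{0,1}. rL i \<le> 1 \<and> rR i \<le> 1)"
    and stat: "stationary \<sigma> N 0 \<gamma> rL rR \<mu>"
  defines "D \<equiv> 1 + real N + 2 * real N * \<gamma>"
  defines "A \<equiv> (\<lambda>x::nat. ((1 + real N) + (1 + 2 * real N) * \<gamma>) / D - (1 + 2 * \<gamma>) / D * real x)"
  defines "B \<equiv> (\<lambda>x::nat. - \<gamma> / D + (1 + 2 * \<gamma>) / D * real x)"
  shows "(\<forall>x\<in>{1..N}. theta \<sigma> N \<mu> 0 x =
            (1 + \<gamma>) / (1 + 2 * \<gamma>) * (A x * rL 0 + B x * rR 0)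
            + \<gamma> / (1 + 2 * \<gamma>) * (A x * rL 1 + B x * rR 1))
       \<and> theta \<sigma> N \<mu> 1 1 = \<gamma> / (1 + \<gamma>) * theta \<sigma> N \<mu> 0 1 + 1 / (1 + \<gamma>) * rL 1
       \<and> (\<forall>x\<in>{2..N-1}. theta \<sigma> N \<mu> 1 x = theta \<sigma> N \<mu> 0 x)
       \<and> theta \<sigma> N \<mu> 1 N = \<gamma> / (1 + \<gamma>) * theta \<sigma> N \<mu> 0 N + 1 / (1 + \<gamma>) * rR 1"
proof -
  interpret switching_stationary \<sigma> N \<gamma> rL rR \<mu>
    using assms by unfold_locales
  obtain k where "\<And>j. j \<le> k j" "(\<lambda>j. (real (k j) + 1) * exit_flux (k j)) \<longlonglongrightarrow> 0"
    using summable_imp_weighted_subseq_tendsto_0[OF summable_exit_flux exit_flux_nonneg] by blast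
  then interpret switching_subseq \<sigma> N \<gamma> rL rR \<mu> k
    by unfold_locales
  have layer0: "theta \<sigma> N \<mu> 0 x = profile x" if "1 \<le> x" "x \<le> N" for x
    using that by (intro theta_eq_lim layer0_tendsto_profile)
  have "theta \<sigma> N \<mu> 1 x = profile x" if "2 \<le> x" "x + 1 \<le> N" for x
    using that by (intro theta_eq_lim layer1_interior_tendsto)
  moreover have "theta \<sigma> N \<mu> 1 1 = \<gamma> / (1 + \<gamma>) * profile 1 + 1 / (1 + \<gamma>) * rL 1"
    "theta \<sigma> N \<mu> 1 N = \<gamma> / (1 + \<gamma>) * profile N + 1 / (1 + \<gamma>) * rR 1"
    by (intro theta_eq_lim layer1_left_tendsto layer1_right_tendsto)+
  ultimately show ?thesis
    using layer0 N2 profile_eq unfolding A_def B_def D_def by auto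
qed

end
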